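(* Assume the codebook is randomly generated so that each codeword, independently, is drawn i.i.d. according to $P$ conditioned on satisfying the prefix condition with respect to $P$, and assume that $M=M_N$ and $N$ satisfy $\frac{N}{\ln N}\le\frac{\ln M}{\ln|\mathcal X|}$. Then for any threshold constants $t_1,t_2\in\mathbb R$ and any asynchronism level $A\ge1$, for any message $m$ and start time $l\in\{1,\dots,A\}$, $$\sum_{m'\neq m}\ \sum_{n=1}^{A+N-1}\ \sum_{i=1}^{\min(N,n)}\mathbb P_{m,l}\big(E(m',n,i)\big)\le\mathrm{poly}(N)\big(M^{-(t_1+t_2-1+o(1))}A+M^{-(t_2-1+o(1))}\big)$$ as $N\to\infty$.
   Context: Channel: finite input alphabet $\mathcal X$, finite output alphabet $\mathcal Y$, transition probabilities $Q(y|x)$, noise symbol $\star\in\mathcal X$. Prefix condition: $c^N\in\mathcal X^N$ satisfies it w.r.t. $P$ if for every $i$ with $N/\ln N<i\le N$, $\|P-\hat P_{c^i}\|_1\le1/\ln N$, where $\hat P_{c^i}$ is the empirical distribution of $(c_1,\dots,c_i)$. A codebook has $M$ codewords $C^N(m)\in\mathcal X^N$. Given the codebook, message $m$ and start time $\nu=l$, outputs $Y_1,Y_2,\dots$ are independent with $Y_i\sim Q(\cdot|\star)$ if $i\le l-1$ or $i\ge l+N$ and $Y_i\sim Q(\cdot|C_{i-l+1}(m))$ for $l\le i\le l+N-1$; $\mathbb P_{m,l}$ is the joint probability over codebook and outputs. Notation: $x_i^j=(x_i,\dots,x_j)$, $x^j=x_1^j$; $\hat P_{(x^n,y^n)}$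 empirical joint distribution, $\hat P_{y^n}$ empirical distribution; $I(J)$ mutual information of joint distribution $J$; $D$ Kullback–Leibler divergence; natural logs. For message $m'$, time $n\ge1$, $i\in\{1,\dots,\min(N,n)\}$, $k\in\{1,\dots,i\}$, $E(m',n,i,k)$ is the intersection of the events $k\,I(\hat P_{(C^k(m'),Y_{n-i+1}^{n-i+k})})+(i-k)\,I(\hat P_{(C_{k+1}^i(m'),Y_{n-i+k+1}^n)})\ge t_2\ln M$ and $i\,D(\hat P_{Y_{n-i+1}^n}\|Q(\cdot|\star))\ge t_1\ln M$ (zero-length terms are $0$), and $E(m',n,i)=\bigcap_{k=1}^iE(m',n,i,k)$. $\mathrm{poly}(N)$ denotes a term growing no faster than polynomially in $N$; $o(1)$ denotes terms vanishing as $N\to\infty$. *)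

theory Defs
  imports "HOL-Probability.Probability"
begin

(* empirical distribution of a finite sequence (0 for the empty sequence) *)
definition emp :: "'a list \<Rightarrow> 'a \<Rightarrow> real" where
  "emp xs a = real (count_list xs a) / real (length xs)"

definition emp_joint :: "'a list \<Rightarrow> 'b list \<Rightarrow> ('a \<times> 'b) \<Rightarrow> real" where
  "emp_joint xs ys = emp (zip xs ys)"

definition mutual_info :: "('a::finite \<times> 'b::finite \<Rightarrow> real) \<Rightarrow> real" where
  "mutual_info J =
     (\<Sum>p\<in>UNIV. if J p > 0
        then J p * ln (J p / ((\<Sum>y\<in>UNIV. J (fst p, y)) * (\<Sum>x\<in>UNIV. J (x, snd p)))) else 0)"

definition KL_div :: "('a::finite \<Rightarrow> real) \<Rightarrow> ('a \<Rightarrow> real) \<Rightarrow> ereal" where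
  "KL_div p q =
     (if \<exists>a. p a > 0 \<and> q a = 0 then \<infinity>
      else ereal (\<Sum>a\<in>UNIV. if p a > 0 then p a * ln (p a / q a) else 0))"

definition prefix_cond :: "'x::finite pmf \<Rightarrow> nat \<Rightarrow> 'x list \<Rightarrow> bool" where
  "prefix_cond P N c \<longleftrightarrow>
     (\<forall>i. real N / ln (real N) < real i \<and> i \<le> N \<longrightarrow>
        (\<Sum>x\<in>UNIV. \<bar>pmf P x - emp (take i c) x\<bar>) \<le> 1 / ln (real N))"

definition codeword_pmf :: "'x::finite pmf \<Rightarrow> nat \<Rightarrow> 'x list pmf" where
  "codeword_pmf P N = cond_pmf (replicate_pmf N P) {c. prefix_cond P N c}"

definition codebook_pmf :: "'x::finite pmf \<Rightarrow> nat \<Rightarrow> nat \<Rightarrow> (nat \<Rightarrow> 'x list) pmf" where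
  "codebook_pmf P N M = Pi_pmf {1..M} [] (\<lambda>_. codeword_pmf P N)"

(* channel input at time j (1-based) when message m starts at time l *)
definition chan_input :: "'x \<Rightarrow> nat \<Rightarrow> (nat \<Rightarrow> 'x list) \<Rightarrow> nat \<Rightarrow> nat \<Rightarrow> nat \<Rightarrow> 'x" where
  "chan_input star N C m l j = (if l \<le> j \<and> j \<le> l + N - 1 then C m ! (j - l) else star)"

definition joint_pmf ::
  "'x::finite pmf \<Rightarrow> ('x \<Rightarrow> 'y pmf) \<Rightarrow> 'x \<Rightarrow> nat \<Rightarrow> nat \<Rightarrow> nat \<Rightarrow> nat \<Rightarrow> nat
     \<Rightarrow> ((nat \<Rightarrow> 'x list) \<times> (nat \<Rightarrow> 'y)) pmf" where
  "joint_pmf P Q star N M m l H =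
     do { C \<leftarrow> codebook_pmf P N M;
          Y \<leftarrow> Pi_pmf {1..H} undefined (\<lambda>j. Q (chan_input star N C m l j));
          return_pmf (C, Y) }"

definition window :: "(nat \<Rightarrow> 'y) \<Rightarrow> nat \<Rightarrow> nat \<Rightarrow> 'y list" where
  "window Y a b = map Y [a..<Suc b]"

definition E_k ::
  "('x::finite \<Rightarrow> 'y::finite pmf) \<Rightarrow> 'x \<Rightarrow> real \<Rightarrow> real \<Rightarrow> nat
     \<Rightarrow> nat \<Rightarrow> nat \<Rightarrow> nat \<Rightarrow> nat \<Rightarrow> ((nat \<Rightarrow> 'x list) \<times> (nat \<Rightarrow> 'y)) set" where
  "E_k Q star t1 t2 M m' n i k =
     {(C, Y).
        real k * mutual_info (emp_joint (take k (C m')) (window Y (n - i + 1) (n - i + k)))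
        + real (i - k) * mutual_info (emp_joint (drop k (take i (C m'))) (window Y (n - i + k + 1) n))
          \<ge> t2 * ln (real M)
      \<and> ereal (real i) * KL_div (emp (window Y (n - i + 1) n)) (pmf (Q star))
          \<ge> ereal (t1 * ln (real M))}"

definition E_ev ::
  "('x::finite \<Rightarrow> 'y::finite pmf) \<Rightarrow> 'x \<Rightarrow> real \<Rightarrow> real \<Rightarrow> nat
     \<Rightarrow> nat \<Rightarrow> nat \<Rightarrow> nat \<Rightarrow> ((nat \<Rightarrow> 'x list) \<times> (nat \<Rightarrow> 'y)) set" where
  "E_ev Q star t1 t2 M m' n i = (\<Inter>k\<in>{1..i}. E_k Q star t1 t2 M m' n i k)"

end

theory Submission
  imports Defs "HOL-Real_Asymp.Real_Asymp"
begin

text \<open>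
  Fix a wrong message \<open>m'\<close>. The outputs depend on the codebook only through the codeword of \<open>m\<close>,
  so the codeword of \<open>m'\<close> is independent of every output window. By the method of types, an i.i.d.
  sequence of length \<open>i\<close> has empirical mutual information at least \<open>r / i\<close> with a fixed window only
  with probability \<open>poly(i) exp (-r)\<close>; conditioning on the prefix condition costs at most a factor 2,
  because by Hoeffding's inequality the condition holds with probability at least \<open>1/2\<close> for large
  \<open>N\<close>. A window that does not meet the transmission consists of i.i.d. noise outputs, so by Sanov's
  bound its empirical divergence from \<open>Q \<star>\<close> is at least \<open>r / i\<close> only with probability
  \<open>poly(i) exp (-r)\<close>. Only \<open>O(N)\<close> end times \<open>n\<close> give windows meeting the transmission, and summing
  over \<open>m'\<close>, \<open>n\<close>, \<open>i\<close> yields the bound with polynomial factor \<open>N^(|X||Y| + |Y| + 2)\<close>.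
\<close>

section \<open>Empirical distributions\<close>

lemma count_list_Cons_of_bool: "count_list (x # xs) y = count_list xs y + of_bool (x = y)"
  by simp

lemma sum_list_map_eq_sum_count_UNIV:
  fixes f :: "'a::finite \<Rightarrow> real"
  shows "(\<Sum>a\<leftarrow>xs. f a) = (\<Sum>a\<in>UNIV. real (count_list xs a) * f a)"
  by (induction xs) (simp_all del: count_list.simps add: count_list_Cons_of_bool distrib_right sum.distrib)

lemma sum_count_list_UNIV: "(\<Sum>a\<in>(UNIV::'a::finite set). count_list xs a) = length xs"
  by (rule sum_count_set) auto

lemma count_list_map_fst:
  "count_list (map fst zs) a = (\<Sum>b\<in>(UNIV::'b::finite set). count_list zs (a, b))"
proof (induction zs)
  case (Cons z zs)
  then show ?case by (cases z) (auto simp del: count_list.simps simp add: count_list_Cons_of_bool sum.distrib)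
qed simp

lemma count_list_map_snd:
  "count_list (map snd zs) b = (\<Sum>a\<in>(UNIV::'a::finite set). count_list zs (a, b))"
proof (induction zs)
  case (Cons z zs)
  then show ?case by (cases z) (auto simp del: count_list.simps simp add: count_list_Cons_of_bool sum.distrib)
qed simp

lemma sum_emp_eq_1: "xs \<noteq> [] \<Longrightarrow> (\<Sum>a\<in>(UNIV::'a::finite set). emp xs a) = 1"
  by (simp add: emp_def flip: sum_divide_distrib of_nat_sum add: sum_count_list_UNIV)

lemma emp_nonneg: "emp xs a \<ge> 0"
  by (simp add: emp_def)

lemma emp_pos_iff: "emp xs a > 0 \<longleftrightarrow> a \<in> set xs"
  using count_list_0_iff[of xs a] by (auto simp: emp_def intro!: divide_pos_pos)

lemma emp_eq_0_iff: "emp xs a = 0 \<longleftrightarrow> a \<notin> set xs"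
  using emp_pos_iff[of xs a] emp_nonneg[of xs a] by linarith

lemma sum_emp_joint_snd:
  assumes "length xs = length ys"
  shows "(\<Sum>b\<in>(UNIV::'b::finite set). emp_joint xs (ys::'b list) (a, b)) = emp xs a"
  using assms count_list_map_fst[of "zip xs ys" a]
  by (simp add: emp_joint_def emp_def flip: sum_divide_distrib of_nat_sum)

lemma sum_emp_joint_fst:
  assumes "length xs = length ys"
  shows "(\<Sum>a\<in>(UNIV::'a::finite set). emp_joint (xs::'a list) ys (a, b)) = emp ys b"
  using assms count_list_map_snd[of "zip xs ys" b]
  by (simp add: emp_joint_def emp_def flip: sum_divide_distrib of_nat_sum)

lemma sum_list_map_eq_length_mult_sum_emp:
  fixes f :: "'a::finite \<Rightarrow> real"
  shows "(\<Sum>a\<leftarrow>xs. f a) = real (length xs) * (\<Sum>a\<in>UNIV. emp xs a * f a)"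
  by (cases "xs = []") (simp_all add: sum_list_map_eq_sum_count_UNIV emp_def sum_distrib_left)

lemma prod_list_eq_exp_sum_list_ln:
  fixes f :: "'a \<Rightarrow> real"
  assumes "\<forall>a\<in>set xs. f a > 0"
  shows "(\<Prod>a\<leftarrow>xs. f a) = exp (\<Sum>a\<leftarrow>xs. ln (f a))"
  using assms by (induction xs) (auto simp: exp_add)

text \<open>Gibbs' inequality, in maximum-likelihood form.\<close>

lemma prod_list_pmf_le_prod_list_emp:
  fixes P :: "'a::finite pmf"
  shows "(\<Prod>a\<leftarrow>xs. pmf P a) \<le> (\<Prod>a\<leftarrow>xs. emp xs a)"
proof (cases "xs \<noteq> [] \<and> (\<forall>a\<in>set xs. pmf P a > 0)")
  case True
  then have pos: "\<forall>a\<in>set xs. pmf P a > 0" and emp_pos: "\<forall>a\<in>set xs. emp xs a > 0"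
    by (auto simp: emp_pos_iff)
  have "(\<Sum>a\<leftarrow>xs. ln (pmf P a)) - (\<Sum>a\<leftarrow>xs. ln (emp xs a))
      = (\<Sum>a\<leftarrow>xs. ln (pmf P a / emp xs a))"
    using pos emp_pos
    by (auto simp: sum_list_subtractf[symmetric] intro!: arg_cong[where f = sum_list] map_cong ln_divide_pos[symmetric])
  also have "\<dots> \<le> (\<Sum>a\<leftarrow>xs. pmf P a / emp xs a - 1)"
    using pos emp_pos by (intro sum_list_mono ln_le_minus_one) auto
  also have "\<dots> = real (length xs) * (\<Sum>a\<in>UNIV. emp xs a * (pmf P a / emp xs a - 1))"
    by (rule sum_list_map_eq_length_mult_sum_emp)
  also have "\<dots> \<le> real (length xs) * (\<Sum>a\<in>UNIV. pmf P a - emp xs a)"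
    by (intro mult_left_mono sum_mono) (auto simp: field_simps emp_nonneg)
  also have "\<dots> = 0"
    using True by (simp add: sum_subtractf sum_pmf_eq_1 sum_emp_eq_1)
  finally show ?thesis
    using pos emp_pos by (simp add: prod_list_eq_exp_sum_list_ln)
next
  case False
  then have "xs = [] \<or> (\<Prod>a\<leftarrow>xs. pmf P a) = 0"
    by (auto simp: prod_list_zero_iff not_less order.antisym)
  then show ?thesis
    by (auto intro!: prod_list_nonneg simp: emp_nonneg)
qed

definition cond_given_snd :: "('a::finite \<times> 'b \<Rightarrow> real) \<Rightarrow> 'a \<times> 'b \<Rightarrow> real" where
  "cond_given_snd J p = J p / (\<Sum>a\<in>UNIV. J (a, snd p))"

lemma prod_list_emp_eq_exp_mutual_info:
  fixes xs :: "'a::finite list" and ys :: "'b::finite list"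
  assumes len: "length xs = length ys"
  shows "(\<Prod>a\<leftarrow>xs. emp xs a)
       = exp (- (real (length xs) * mutual_info (emp_joint xs ys)))
         * (\<Prod>p\<leftarrow>zip xs ys. cond_given_snd (emp_joint xs ys) p)"
proof -
  define J where "J = emp_joint xs ys"
  define z where "z = zip xs ys"
  define g where "g p = ln (J p / (emp xs (fst p) * emp ys (snd p)))" for p
  have J_eq: "J = emp z"
    by (simp add: J_def z_def emp_joint_def)
  have fst_z: "map fst z = xs" and length_z: "length z = length xs"
    using len by (simp_all add: z_def)
  have pos: "J p > 0" "emp xs (fst p) > 0" "emp ys (snd p) > 0" if "p \<in> set z" for p
    using that set_zip_leftD[of "fst p" "snd p" xs ys] set_zip_rightD[of "fst p" "snd p" xs ys]
    by (auto simp: J_eq emp_pos_iff z_def)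
  have "mutual_info J = (\<Sum>p\<in>UNIV. emp z p * g p)"
    unfolding mutual_info_def g_def J_def sum_emp_joint_snd[OF len] sum_emp_joint_fst[OF len]
    by (intro sum.cong) (auto simp: J_eq[unfolded J_def] emp_pos_iff emp_eq_0_iff)
  then have MI: "real (length xs) * mutual_info J = (\<Sum>p\<leftarrow>z. g p)"
    by (simp add: sum_list_map_eq_length_mult_sum_emp length_z)
  have "ln (emp xs (fst p)) = ln (cond_given_snd J p) - g p" if "p \<in> set z" for p
    using pos[OF that]
    by (simp add: cond_given_snd_def J_def sum_emp_joint_fst[OF len] g_def ln_mult ln_divide_pos)
  then have "(\<Sum>a\<leftarrow>xs. ln (emp xs a)) = (\<Sum>p\<leftarrow>z. ln (cond_given_snd J p)) - (\<Sum>p\<leftarrow>z. g p)"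
    unfolding fst_z[symmetric] by (simp add: sum_list_subtractf cong: map_cong)
  moreover have "\<forall>a\<in>set xs. emp xs a > 0" "\<forall>p\<in>set z. cond_given_snd J p > 0"
    using pos by (auto simp: emp_pos_iff cond_given_snd_def J_def sum_emp_joint_fst[OF len])
  ultimately have "(\<Prod>a\<leftarrow>xs. emp xs a)
      = exp (- (real (length xs) * mutual_info J)) * (\<Prod>p\<leftarrow>z. cond_given_snd J p)"
    by (simp add: prod_list_eq_exp_sum_list_ln MI flip: exp_add)
  then show ?thesis
    by (simp add: J_def z_def)
qed

definition KL_sum :: "('a::finite \<Rightarrow> real) \<Rightarrow> ('a \<Rightarrow> real) \<Rightarrow> real" where
  "KL_sum p q = (\<Sum>a\<in>UNIV. if p a > 0 then p a * ln (p a / q a) else 0)"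

lemma KL_div_eq_KL_sum: "\<not> (\<exists>a. p a > 0 \<and> q a = 0) \<Longrightarrow> KL_div p q = ereal (KL_sum p q)"
  by (simp add: KL_div_def KL_sum_def)

lemma prod_list_eq_exp_KL_sum:
  fixes q :: "'a::finite \<Rightarrow> real"
  assumes q_pos: "\<forall>a\<in>set ys. q a > 0"
  shows "(\<Prod>a\<leftarrow>ys. q a) = exp (- (real (length ys) * KL_sum (emp ys) q)) * (\<Prod>a\<leftarrow>ys. emp ys a)"
proof -
  define h where "h a = ln (emp ys a / q a)" for a
  have "KL_sum (emp ys) q = (\<Sum>a\<in>UNIV. emp ys a * h a)"
    unfolding KL_sum_def h_def by (intro sum.cong) (auto simp: emp_pos_iff emp_eq_0_iff)
  then have KL: "real (length ys) * KL_sum (emp ys) q = (\<Sum>a\<leftarrow>ys. h a)"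
    by (simp add: sum_list_map_eq_length_mult_sum_emp)
  have emp_pos: "\<forall>a\<in>set ys. emp ys a > 0"
    by (simp add: emp_pos_iff)
  have "ln (q a) = ln (emp ys a) - h a" if "a \<in> set ys" for a
    using that q_pos emp_pos by (simp add: h_def ln_divide_pos)
  then have "(\<Sum>a\<leftarrow>ys. ln (q a)) = (\<Sum>a\<leftarrow>ys. ln (emp ys a)) - (\<Sum>a\<leftarrow>ys. h a)"
    by (simp add: sum_list_subtractf cong: map_cong)
  then show ?thesis
    using q_pos emp_pos by (simp add: prod_list_eq_exp_sum_list_ln KL flip: exp_add)
qed

section \<open>Method of types\<close>

lemma lists_UNIV_length_Suc_eq:
  "{xs::'a list. length xs = Suc n} = (\<lambda>(a, xs). a # xs) ` (UNIV \<times> {xs. length xs = n})"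
  by (auto simp: length_Suc_conv image_iff)

lemma finite_lists_UNIV_length_eq: "finite {xs::'a::finite list. length xs = n}"
  using finite_lists_length_eq[of "UNIV::'a set" n] by simp

lemma sum_lists_length_prod_zip:
  fixes w :: "'a::finite \<times> 'b \<Rightarrow> real"
  shows "(\<Sum>xs | length xs = length ys. \<Prod>p\<leftarrow>zip xs ys. w p) = (\<Prod>b\<leftarrow>ys. \<Sum>a\<in>UNIV. w (a, b))"
proof (induction ys)
  case Nil
  have "{xs::'a list. length xs = 0} = {[]}" by auto
  then show ?case by simp
next
  case (Cons b ys)
  have inj: "inj_on (\<lambda>(a, xs). a # xs) (UNIV \<times> {xs::'a list. length xs = length ys})"
    by (auto simp: inj_on_def)
  have "(\<Sum>xs | length xs = length (b # ys). \<Prod>p\<leftarrow>zip xs (b # ys). w p)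
      = (\<Sum>(a, xs)\<in>UNIV \<times> {xs. length xs = length ys}. w (a, b) * (\<Prod>p\<leftarrow>zip xs ys. w p))"
    by (simp add: lists_UNIV_length_Suc_eq sum.reindex[OF inj]) (intro sum.cong; auto)
  also have "\<dots> = (\<Sum>a\<in>UNIV. w (a, b)) * (\<Sum>xs | length xs = length ys. \<Prod>p\<leftarrow>zip xs ys. w p)"
    by (simp add: sum.cartesian_product[symmetric] sum_product)
  finally show ?case
    using Cons by simp
qed

lemma sum_lists_length_prod:
  fixes g :: "'a::finite \<Rightarrow> real"
  shows "(\<Sum>xs | length xs = n. \<Prod>a\<leftarrow>xs. g a) = (\<Sum>a\<in>UNIV. g a) ^ n"
proof -
  have "(\<Prod>p\<leftarrow>zip xs (replicate n ()). g (fst p)) = (\<Prod>a\<leftarrow>xs. g a)" if "length xs = n" for xs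
    using that by (simp flip: map_map[unfolded comp_def] add: map_fst_zip)
  then show ?thesis
    using sum_lists_length_prod_zip[of "\<lambda>p. g (fst p)" "replicate n ()"]
    by (simp add: prod_list_replicate)
qed

lemma prod_list_le_1:
  fixes f :: "'a \<Rightarrow> real"
  assumes "\<forall>a\<in>set xs. 0 \<le> f a \<and> f a \<le> 1"
  shows "(\<Prod>a\<leftarrow>xs. f a) \<le> 1"
proof -
  have "0 \<le> (\<Prod>a\<leftarrow>xs. f a) \<and> (\<Prod>a\<leftarrow>xs. f a) \<le> 1"
    using assms by (induction xs) (auto intro: mult_le_one)
  then show ?thesis ..
qed

definition empirical_types :: "nat \<Rightarrow> ('a::finite \<Rightarrow> real) set" where
  "empirical_types k = (\<lambda>c a. real (c a) / real k) ` (UNIV \<rightarrow>\<^sub>E {0..k})"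

lemma finite_empirical_types: "finite (empirical_types k)"
  by (simp add: empirical_types_def finite_PiE)

lemma card_empirical_types_le: "card (empirical_types k :: ('a::finite \<Rightarrow> real) set) \<le> (k + 1) ^ CARD('a)"
proof -
  have "card (empirical_types k :: ('a \<Rightarrow> real) set) \<le> card (UNIV \<rightarrow>\<^sub>E {0..k} :: ('a \<Rightarrow> nat) set)"
    unfolding empirical_types_def by (intro card_image_le finite_PiE) auto
  then show ?thesis
    by (simp add: card_PiE)
qed

lemma emp_in_empirical_types: "emp xs \<in> empirical_types (length xs)"
  unfolding empirical_types_def
proof
  show "emp xs = (\<lambda>a. real (count_list xs a) / real (length xs))"
    by (simp add: emp_def fun_eq_iff)
  show "count_list xs \<in> UNIV \<rightarrow>\<^sub>E {0..length xs}"
    by (simp add: PiE_UNIV_domain count_le_length)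
qed

lemma sum_le_card_mult_fibre_bound:
  fixes f :: "'a \<Rightarrow> real" and T :: "'a \<Rightarrow> 'b"
  assumes "finite S" "T ` S \<subseteq> Z" "finite Z" "B \<ge> 0"
    and fibre: "\<And>V. V \<in> T ` S \<Longrightarrow> (\<Sum>x | x \<in> S \<and> T x = V. f x) \<le> B"
  shows "sum f S \<le> real (card Z) * B"
proof -
  have "sum f S = (\<Sum>V\<in>T ` S. \<Sum>x | x \<in> S \<and> T x = V. f x)"
    using assms(1) by (rule sum.image_gen)
  also have "\<dots> \<le> real (card (T ` S)) * B"
    using sum_mono[of "T ` S", OF fibre] by simp
  also have "\<dots> \<le> real (card Z) * B"
    using assms(2-4) by (intro mult_right_mono) (auto intro: card_mono)
  finally show ?thesis .
qed

lemma pmf_replicate_pmf: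
  "pmf (replicate_pmf n p) xs = (if length xs = n then \<Prod>a\<leftarrow>xs. pmf p a else 0)"
proof (induction n arbitrary: xs)
  case 0
  then show ?case by (cases xs) (auto simp: pmf_return)
next
  case (Suc n)
  show ?case
  proof (cases xs)
    case Nil
    then have "xs \<notin> set_pmf (replicate_pmf (Suc n) p)"
      by (simp add: set_replicate_pmf)
    then show ?thesis
      using Nil by (simp add: set_pmf_iff del: replicate_pmf.simps)
  next
    case (Cons a zs)
    have "replicate_pmf (Suc n) p = map_pmf (\<lambda>(x, xs). x # xs) (pair_pmf p (replicate_pmf n p))"
      by (simp add: pair_pmf_def map_pmf_def bind_assoc_pmf bind_return_pmf)
    moreover have "inj (\<lambda>(x::'a, xs). x # xs)"
      by (auto simp: inj_def)
    ultimately have "pmf (replicate_pmf (Suc n) p) xs = pmf (pair_pmf p (replicate_pmf n p)) (a, zs)"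
      using pmf_map_inj'[of "\<lambda>(x, xs). x # xs" _ "(a, zs)"] Cons by simp
    then show ?thesis
      using Suc Cons by (simp add: pmf_pair)
  qed
qed

lemma measure_replicate_pmf:
  fixes p :: "'a::finite pmf"
  shows "measure_pmf.prob (replicate_pmf n p) X = (\<Sum>xs | xs \<in> X \<and> length xs = n. \<Prod>a\<leftarrow>xs. pmf p a)"
proof -
  have "measure_pmf.prob (replicate_pmf n p) X = measure_pmf.prob (replicate_pmf n p) {xs \<in> X. length xs = n}"
    by (intro measure_prob_cong_0) (auto simp: pmf_replicate_pmf)
  also have "\<dots> = (\<Sum>xs | xs \<in> X \<and> length xs = n. pmf (replicate_pmf n p) xs)"
    by (intro measure_measure_pmf_finite) (auto intro: finite_subset[OF _ finite_lists_UNIV_length_eq])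
  finally show ?thesis
    by (simp add: pmf_replicate_pmf)
qed

lemma map_pmf_take_replicate_pmf:
  assumes "i \<le> n"
  shows "map_pmf (take i) (replicate_pmf n p) = replicate_pmf i p"
proof -
  have "replicate_pmf n p = do {xs \<leftarrow> replicate_pmf i p; ys \<leftarrow> replicate_pmf (n - i) p; return_pmf (xs @ ys)}"
    using assms replicate_pmf_distrib[of i "n - i" p] by simp
  then have "map_pmf (take i) (replicate_pmf n p)
      = do {xs \<leftarrow> replicate_pmf i p; ys \<leftarrow> replicate_pmf (n - i) p; return_pmf (take i (xs @ ys))}"
    by (simp add: map_bind_pmf)
  also have "\<dots> = do {xs \<leftarrow> replicate_pmf i p; ys \<leftarrow> replicate_pmf (n - i) p; return_pmf xs}"
    by (intro bind_pmf_cong refl) (auto simp: set_replicate_pmf)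
  finally show ?thesis
    by (simp add: bind_return_pmf')
qed

lemma emp_joint_nonneg: "emp_joint xs ys p \<ge> 0"
  by (simp add: emp_joint_def emp_nonneg)

lemma emp_joint_in_empirical_types:
  "length xs = length ys \<Longrightarrow> emp_joint xs ys \<in> empirical_types (length ys)"
  using emp_in_empirical_types[of "zip xs ys"] by (simp add: emp_joint_def)

lemma cond_given_snd_nonneg: "(\<And>p. J p \<ge> 0) \<Longrightarrow> cond_given_snd J p \<ge> 0"
  by (simp add: cond_given_snd_def sum_nonneg)

lemma sum_cond_given_snd_le_1: "(\<Sum>a\<in>UNIV. cond_given_snd J (a, b)) \<le> 1"
  by (simp add: cond_given_snd_def flip: sum_divide_distrib)

lemma sum_prod_pmf_joint_type_le:
  fixes P :: "'a::finite pmf" and ys :: "'b::finite list"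
  assumes r: "r \<le> real (length ys) * mutual_info V"
  shows "(\<Sum>xs | length xs = length ys \<and> emp_joint xs ys = V. \<Prod>a\<leftarrow>xs. pmf P a) \<le> exp (- r)"
proof (cases "\<exists>xs. length xs = length ys \<and> emp_joint xs ys = V")
  case True
  then have V_nonneg: "\<forall>p. V p \<ge> 0"
    using emp_joint_nonneg by blast
  have cond_nonneg: "cond_given_snd V p \<ge> 0" for p
    using V_nonneg by (intro cond_given_snd_nonneg) auto
  let ?w = "\<lambda>xs. \<Prod>p\<leftarrow>zip xs ys. cond_given_snd V p"
  have w_nonneg: "?w xs \<ge> 0" for xs
    using cond_nonneg by (intro prod_list_nonneg) auto
  have "(\<Sum>xs | length xs = length ys \<and> emp_joint xs ys = V. \<Prod>a\<leftarrow>xs. pmf P a)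
      \<le> (\<Sum>xs | length xs = length ys \<and> emp_joint xs ys = V. exp (- r) * ?w xs)"
  proof (intro sum_mono)
    fix xs assume "xs \<in> {xs. length xs = length ys \<and> emp_joint xs ys = V}"
    then have len: "length xs = length ys" and V: "V = emp_joint xs ys"
      by auto
    have "(\<Prod>a\<leftarrow>xs. pmf P a) \<le> (\<Prod>a\<leftarrow>xs. emp xs a)"
      by (rule prod_list_pmf_le_prod_list_emp)
    also have "\<dots> = exp (- (real (length ys) * mutual_info V)) * ?w xs"
      using prod_list_emp_eq_exp_mutual_info[OF len] by (simp add: V len)
    also have "\<dots> \<le> exp (- r) * ?w xs"
      using r w_nonneg by (intro mult_right_mono) auto
    finally show "(\<Prod>a\<leftarrow>xs. pmf P a) \<le> exp (- r) * ?w xs" .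
  qed
  also have "\<dots> \<le> (\<Sum>xs | length xs = length ys. exp (- r) * ?w xs)"
    using w_nonneg by (intro sum_mono2 finite_lists_UNIV_length_eq) auto
  also have "\<dots> = exp (- r) * (\<Prod>b\<leftarrow>ys. \<Sum>a\<in>UNIV. cond_given_snd V (a, b))"
    by (simp add: sum_lists_length_prod_zip flip: sum_distrib_left)
  also have "\<dots> \<le> exp (- r)"
    using cond_nonneg by (intro mult_left_le prod_list_le_1) (auto intro: sum_nonneg sum_cond_given_snd_le_1)
  finally show ?thesis .
next
  case False
  then have "{xs. length xs = length ys \<and> emp_joint xs ys = V} = {}"
    by blast
  then show ?thesis
    by (simp only: sum.empty) simp
qed

lemma prob_replicate_pmf_mutual_info_ge:
  fixes P :: "'a::finite pmf" and ys :: "'b::finite list"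
  shows "measure_pmf.prob (replicate_pmf (length ys) P) {xs. r \<le> real (length ys) * mutual_info (emp_joint xs ys)}
       \<le> real (length ys + 1) ^ CARD('a \<times> 'b) * exp (- r)"
proof -
  define S where "S = {xs::'a list. r \<le> real (length ys) * mutual_info (emp_joint xs ys) \<and> length xs = length ys}"
  have "measure_pmf.prob (replicate_pmf (length ys) P) {xs. r \<le> real (length ys) * mutual_info (emp_joint xs ys)}
      = (\<Sum>xs\<in>S. \<Prod>a\<leftarrow>xs. pmf P a)"
    by (simp add: measure_replicate_pmf S_def)
  also have "\<dots> \<le> real (card (empirical_types (length ys) :: ('a \<times> 'b \<Rightarrow> real) set)) * exp (- r)"
  proof (rule sum_le_card_mult_fibre_bound[where T = "\<lambda>xs. emp_joint xs ys"])
    show "finite S"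
      unfolding S_def by (rule finite_subset[OF _ finite_lists_UNIV_length_eq]) auto
    show "(\<lambda>xs. emp_joint xs ys) ` S \<subseteq> empirical_types (length ys)"
      by (auto simp: S_def emp_joint_in_empirical_types)
    fix V assume "V \<in> (\<lambda>xs. emp_joint xs ys) ` S"
    then have "r \<le> real (length ys) * mutual_info V"
      by (auto simp: S_def)
    moreover from this have "{xs. xs \<in> S \<and> emp_joint xs ys = V} = {xs. length xs = length ys \<and> emp_joint xs ys = V}"
      by (auto simp: S_def)
    ultimately show "(\<Sum>xs | xs \<in> S \<and> emp_joint xs ys = V. \<Prod>a\<leftarrow>xs. pmf P a) \<le> exp (- r)"
      by (simp add: sum_prod_pmf_joint_type_le)
  qed (simp_all add: finite_empirical_types)
  also have "\<dots> \<le> real (length ys + 1) ^ CARD('a \<times> 'b) * exp (- r)"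
    using card_empirical_types_le[of "length ys", where 'a = "'a \<times> 'b"]
    by (intro mult_right_mono) (simp_all flip: of_nat_le_iff[where 'a = real])
  finally show ?thesis .
qed

lemma sum_prod_pmf_type_le:
  fixes q :: "'a::finite pmf"
  assumes r: "ereal r \<le> ereal (real k) * KL_div V (pmf q)"
  shows "(\<Sum>ys | length ys = k \<and> emp ys = V. \<Prod>a\<leftarrow>ys. pmf q a) \<le> exp (- r)"
proof (cases "\<exists>ys. length ys = k \<and> emp ys = V")
  case True
  then obtain ys0 where ys0: "length ys0 = k" "emp ys0 = V"
    by blast
  have "(\<Sum>ys | length ys = k \<and> emp ys = V. \<Prod>a\<leftarrow>ys. pmf q a)
      \<le> (\<Sum>ys | length ys = k \<and> emp ys = V. exp (- r) * (\<Prod>a\<leftarrow>ys. V a))"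
  proof (intro sum_mono)
    fix ys assume "ys \<in> {ys. length ys = k \<and> emp ys = V}"
    then have len: "length ys = k" and V: "V = emp ys"
      by auto
    have V_prod_nonneg: "(\<Prod>a\<leftarrow>ys. V a) \<ge> 0"
      by (auto simp: V emp_nonneg intro!: prod_list_nonneg)
    show "(\<Prod>a\<leftarrow>ys. pmf q a) \<le> exp (- r) * (\<Prod>a\<leftarrow>ys. V a)"
    proof (cases "\<forall>a\<in>set ys. pmf q a > 0")
      case True
      then have "KL_div V (pmf q) = ereal (KL_sum V (pmf q))"
        by (intro KL_div_eq_KL_sum) (auto simp: V emp_pos_iff)
      then have "r \<le> real k * KL_sum V (pmf q)"
        using r by simp
      moreover have "(\<Prod>a\<leftarrow>ys. pmf q a) = exp (- (real k * KL_sum V (pmf q))) * (\<Prod>a\<leftarrow>ys. V a)"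
        using prod_list_eq_exp_KL_sum[OF True] by (simp add: V len)
      ultimately show ?thesis
        using V_prod_nonneg by (simp add: mult_right_mono)
    next
      case False
      then have "(\<Prod>a\<leftarrow>ys. pmf q a) = 0"
        by (auto simp: prod_list_zero_iff not_less order.antisym)
      then show ?thesis
        using V_prod_nonneg by simp
    qed
  qed
  also have "\<dots> \<le> (\<Sum>ys | length ys = k. exp (- r) * (\<Prod>a\<leftarrow>ys. V a))"
    using ys0 by (intro sum_mono2 finite_lists_UNIV_length_eq) (auto intro!: mult_nonneg_nonneg prod_list_nonneg simp: emp_nonneg)
  also have "\<dots> = exp (- r) * (\<Sum>a\<in>UNIV. V a) ^ k"
    by (simp add: sum_lists_length_prod flip: sum_distrib_left)
  also have "(\<Sum>a\<in>UNIV. V a) ^ k = 1"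
    using ys0 sum_emp_eq_1[of ys0] by (cases "k = 0") auto
  finally show ?thesis
    by simp
next
  case False
  then have "{ys. length ys = k \<and> emp ys = V} = {}"
    by blast
  then show ?thesis
    by (simp only: sum.empty) simp
qed

lemma prob_replicate_pmf_KL_ge:
  fixes q :: "'a::finite pmf"
  shows "measure_pmf.prob (replicate_pmf k q) {ys. ereal r \<le> ereal (real k) * KL_div (emp ys) (pmf q)}
       \<le> real (k + 1) ^ CARD('a) * exp (- r)"
proof -
  define S where "S = {ys::'a list. ereal r \<le> ereal (real k) * KL_div (emp ys) (pmf q) \<and> length ys = k}"
  have "measure_pmf.prob (replicate_pmf k q) {ys. ereal r \<le> ereal (real k) * KL_div (emp ys) (pmf q)}
      = (\<Sum>ys\<in>S. \<Prod>a\<leftarrow>ys. pmf q a)"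
    by (simp add: measure_replicate_pmf S_def)
  also have "\<dots> \<le> real (card (empirical_types k :: ('a \<Rightarrow> real) set)) * exp (- r)"
  proof (rule sum_le_card_mult_fibre_bound[where T = emp])
    show "finite S"
      unfolding S_def by (rule finite_subset[OF _ finite_lists_UNIV_length_eq[of k]]) auto
    show "emp ` S \<subseteq> empirical_types k"
      using emp_in_empirical_types by (auto simp: S_def)
    fix V assume "V \<in> emp ` S"
    then have "ereal r \<le> ereal (real k) * KL_div V (pmf q)"
      by (auto simp: S_def)
    moreover from this have "{ys. ys \<in> S \<and> emp ys = V} = {ys. length ys = k \<and> emp ys = V}"
      by (auto simp: S_def)
    ultimately show "(\<Sum>ys | ys \<in> S \<and> emp ys = V. \<Prod>a\<leftarrow>ys. pmf q a) \<le> exp (- r)"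
      by (simp add: sum_prod_pmf_type_le)
  qed (simp_all add: finite_empirical_types)
  also have "\<dots> \<le> real (k + 1) ^ CARD('a) * exp (- r)"
    using card_empirical_types_le[of k, where 'a = 'a]
    by (intro mult_right_mono) (simp_all flip: of_nat_le_iff[where 'a = real])
  finally show ?thesis .
qed

section \<open>The prefix condition\<close>

lemma map_pmf_eq_bernoulli_pmf: "map_pmf (\<lambda>x. x = a) p = bernoulli_pmf (pmf p a)"
proof (rule pmf_eqI)
  fix b :: bool
  have "pmf (map_pmf (\<lambda>x. x = a) p) True = pmf p a"
    by (simp add: pmf_map measure_pmf_single[symmetric] vimage_def)
  moreover have "pmf (map_pmf (\<lambda>x. x = a) p) False = 1 - pmf p a"
    using measure_pmf.prob_compl[of "{a}" p]
    by (simp add: pmf_map vimage_def Diff_eq Compl_eq measure_pmf_single)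
  ultimately show "pmf (map_pmf (\<lambda>x. x = a) p) b = pmf (bernoulli_pmf (pmf p a)) b"
    by (cases b) (auto simp: pmf_le_1)
qed

lemma map_pmf_count_list_replicate_pmf:
  "map_pmf (\<lambda>xs. count_list xs a) (replicate_pmf n p) = binomial_pmf n (pmf p a)"
proof (induction n)
  case 0
  then show ?case by (simp add: binomial_pmf_0 pmf_le_1)
next
  case (Suc n)
  have "map_pmf (\<lambda>xs. count_list xs a) (replicate_pmf (Suc n) p)
      = do {b \<leftarrow> map_pmf (\<lambda>x. x = a) p; k \<leftarrow> map_pmf (\<lambda>xs. count_list xs a) (replicate_pmf n p);
            return_pmf ((if b then 1 else 0) + k)}"
    by (auto simp: map_bind_pmf bind_map_pmf intro!: bind_pmf_cong)
  then show ?case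
    by (simp add: Suc map_pmf_eq_bernoulli_pmf binomial_pmf_Suc pmf_le_1)
qed

lemma prob_count_take_deviation_le:
  assumes "0 < i" "i \<le> n" "\<delta> > 0"
  shows "measure_pmf.prob (replicate_pmf n P) {xs. \<delta> \<le> \<bar>real (count_list (take i xs) a) / real i - pmf P a\<bar>}
       \<le> 2 * exp (- 2 * real i * \<delta>\<^sup>2)"
proof -
  have "map_pmf (\<lambda>xs. count_list (take i xs) a) (replicate_pmf n P)
      = map_pmf (\<lambda>xs. count_list xs a) (map_pmf (take i) (replicate_pmf n P))"
    by (simp add: pmf.map_comp o_def)
  also have "\<dots> = binomial_pmf i (pmf P a)"
    using assms by (simp add: map_pmf_take_replicate_pmf map_pmf_count_list_replicate_pmf)
  finally have binomial: "map_pmf (\<lambda>xs. count_list (take i xs) a) (replicate_pmf n P) = binomial_pmf i (pmf P a)" .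
  have "measure_pmf.prob (replicate_pmf n P) {xs. \<delta> \<le> \<bar>real (count_list (take i xs) a) / real i - pmf P a\<bar>}
      = measure_pmf.prob (binomial_pmf i (pmf P a)) {x. \<delta> \<le> \<bar>real x / real i - pmf P a\<bar>}"
    by (simp add: vimage_def flip: binomial)
  moreover have "binomial_distribution (pmf P a)"
    by unfold_locales (simp add: pmf_le_1)
  ultimately show ?thesis
    using binomial_distribution.prob_abs_ge'[of "pmf P a" i \<delta>] assms by simp
qed

lemma not_prefix_cond_subset_count_deviation:
  fixes P :: "'x::finite pmf"
  shows "{c. \<not> prefix_cond P N c \<and> length c = N}
    \<subseteq> (\<Union>(i, a)\<in>{i. real N / ln (real N) < real i \<and> i \<le> N} \<times> UNIV.
          {c. 1 / (real CARD('x) * ln (real N)) \<le> \<bar>real (count_list (take i c) a) / real i - pmf P a\<bar>})"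
proof
  fix c assume "c \<in> {c. \<not> prefix_cond P N c \<and> length c = N}"
  then obtain i where len: "length c = N" and i: "real N / ln (real N) < real i" "i \<le> N"
    and far: "1 / ln (real N) < (\<Sum>x\<in>UNIV. \<bar>pmf P x - emp (take i c) x\<bar>)"
    by (auto simp: prefix_cond_def not_le)
  define \<delta> where "\<delta> = 1 / (real CARD('x) * ln (real N))"
  have emp_take: "emp (take i c) x = real (count_list (take i c) x) / real i" for x
    using len i by (simp add: emp_def min_def)
  have "\<exists>a. \<delta> \<le> \<bar>real (count_list (take i c) a) / real i - pmf P a\<bar>"
  proof (rule ccontr)
    assume "\<nexists>a. \<delta> \<le> \<bar>real (count_list (take i c) a) / real i - pmf P a\<bar>"
    then have "\<bar>pmf P x - emp (take i c) x\<bar> \<le> \<delta>" for x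
      by (auto simp: emp_take abs_minus_commute not_le less_imp_le)
    then have "(\<Sum>x\<in>UNIV. \<bar>pmf P x - emp (take i c) x\<bar>) \<le> real CARD('x) * \<delta>"
      using sum_mono[of UNIV "\<lambda>x. \<bar>pmf P x - emp (take i c) x\<bar>" "\<lambda>_. \<delta>"] by simp
    also have "\<dots> = 1 / ln (real N)"
      by (simp add: \<delta>_def)
    finally show False
      using far by simp
  qed
  then show "c \<in> (\<Union>(i, a)\<in>{i. real N / ln (real N) < real i \<and> i \<le> N} \<times> UNIV.
          {c. \<delta> \<le> \<bar>real (count_list (take i c) a) / real i - pmf P a\<bar>})"
    using i by auto
qed

lemma prob_not_prefix_cond_le:
  fixes P :: "'x::finite pmf"
  assumes "N \<ge> 3"
  shows "measure_pmf.prob (replicate_pmf N P) {c. \<not> prefix_cond P N c}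
     \<le> 2 * real CARD('x) * real N * exp (- 2 * (real N / ln (real N)) * (1 / (real CARD('x) * ln (real N)))\<^sup>2)"
proof -
  define \<delta> where "\<delta> = 1 / (real CARD('x) * ln (real N))"
  define B where "B = 2 * exp (- 2 * (real N / ln (real N)) * \<delta>\<^sup>2)"
  define I where "I = {i. real N / ln (real N) < real i \<and> i \<le> N}"
  define D where "D = (\<lambda>(i, a). {c. \<delta> \<le> \<bar>real (count_list (take i c) a) / real i - pmf P a\<bar>})"
  have "real N / ln (real N) > 0"
    using assms by simp
  then have I: "I \<subseteq> {1..N}"
    by (auto simp: I_def Suc_le_eq)
  have D: "measure_pmf.prob (replicate_pmf N P) (D (i, a)) \<le> B" if "i \<in> I" for i a
  proof -
    have "measure_pmf.prob (replicate_pmf N P) (D (i, a)) \<le> 2 * exp (- 2 * real i * \<delta>\<^sup>2)"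
      unfolding D_def case_prod_conv using that I assms
      by (intro prob_count_take_deviation_le) (auto simp: \<delta>_def)
    moreover have "(real N / ln (real N)) * \<delta>\<^sup>2 \<le> real i * \<delta>\<^sup>2"
      using that by (intro mult_right_mono) (auto simp: I_def)
    then have "exp (- 2 * real i * \<delta>\<^sup>2) \<le> exp (- 2 * (real N / ln (real N)) * \<delta>\<^sup>2)"
      by simp
    ultimately show ?thesis
      unfolding B_def by linarith
  qed
  have "measure_pmf.prob (replicate_pmf N P) {c. \<not> prefix_cond P N c}
      = measure_pmf.prob (replicate_pmf N P) {c. \<not> prefix_cond P N c \<and> length c = N}"
    by (intro measure_prob_cong_0) (auto simp: pmf_replicate_pmf)
  also have "\<dots> \<le> measure_pmf.prob (replicate_pmf N P) (\<Union>ia\<in>I \<times> UNIV. D ia)"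
    using not_prefix_cond_subset_count_deviation[of P N]
    by (intro measure_pmf.finite_measure_mono) (simp_all add: I_def D_def \<delta>_def)
  also have "\<dots> \<le> (\<Sum>ia\<in>I \<times> UNIV. measure_pmf.prob (replicate_pmf N P) (D ia))"
    using finite_subset[OF I] by (intro measure_pmf.finite_measure_subadditive_finite) auto
  also have "\<dots> \<le> (\<Sum>ia\<in>I \<times> (UNIV::'x set). B)"
    using D by (intro sum_mono) auto
  also have "\<dots> \<le> real N * real CARD('x) * B"
    using card_mono[OF _ I] by (simp add: card_cartesian_product B_def)
  finally show ?thesis
    by (simp add: B_def \<delta>_def algebra_simps)
qed

lemma eventually_prob_prefix_cond_ge:
  fixes P :: "'x::finite pmf"
  shows "\<forall>\<^sub>F N in sequentially. measure_pmf.prob (replicate_pmf N P) {c. prefix_cond P N c} \<ge> 1/2"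
proof -
  define C where "C = real CARD('x)"
  have "C > 0"
    by (simp add: C_def)
  then have lim: "((\<lambda>N::nat. 2 * C * real N * exp (- 2 * (real N / ln (real N)) * (1 / (C * ln (real N)))\<^sup>2))
        \<longlongrightarrow> 0) sequentially"
    by real_asymp
  have "\<forall>\<^sub>F N in sequentially.
      2 * C * real N * exp (- 2 * (real N / ln (real N)) * (1 / (C * ln (real N)))\<^sup>2) < 1/2"
    using order_tendstoD(2)[OF lim, of "1/2"] by simp
  then show ?thesis
    using eventually_ge_at_top[of 3]
  proof eventually_elim
    case (elim N)
    have "measure_pmf.prob (replicate_pmf N P) {c. \<not> prefix_cond P N c} < 1/2"
      using prob_not_prefix_cond_le[OF elim(2), of P] elim(1) by (simp add: C_def)
    moreover have "measure_pmf.prob (replicate_pmf N P) {c. \<not> prefix_cond P N c}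
        = 1 - measure_pmf.prob (replicate_pmf N P) {c. prefix_cond P N c}"
      using measure_pmf.prob_compl[of "{c. prefix_cond P N c}" "replicate_pmf N P"]
      by (simp add: Compl_eq Diff_eq)
    ultimately show ?case
      by simp
  qed
qed

section \<open>Error events of a wrong codeword\<close>

lemma measure_bind_pmf_le:
  fixes b :: real
  assumes le: "\<And>x. x \<in> set_pmf p \<Longrightarrow> measure_pmf.prob (f x) S \<le> b * indicator T x"
    and b: "b \<ge> 0"
  shows "measure_pmf.prob (bind_pmf p f) S \<le> b * measure_pmf.prob p T"
proof -
  have "emeasure (measure_pmf (bind_pmf p f)) S = (\<integral>\<^sup>+x. emeasure (measure_pmf (f x)) S \<partial>measure_pmf p)"
    by simp
  also have "\<dots> \<le> (\<integral>\<^sup>+x. ennreal b * indicator T x \<partial>measure_pmf p)"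
  proof (intro nn_integral_mono_AE)
    show "AE x in measure_pmf p. emeasure (measure_pmf (f x)) S \<le> ennreal b * indicator T x"
      unfolding AE_measure_pmf_iff
    proof
      fix x assume x: "x \<in> set_pmf p"
      have "emeasure (measure_pmf (f x)) S = ennreal (measure_pmf.prob (f x) S)"
        by (simp add: measure_pmf.emeasure_eq_measure)
      also have "\<dots> \<le> ennreal (b * indicator T x)"
        using le[OF x] by (intro ennreal_leI)
      also have "\<dots> = ennreal b * indicator T x"
        using b by (simp add: ennreal_mult indicator_def)
      finally show "emeasure (measure_pmf (f x)) S \<le> ennreal b * indicator T x" .
    qed
  qed
  also have "\<dots> = ennreal (b * measure_pmf.prob p T)"
    using b by (simp add: nn_integral_cmult_indicator measure_pmf.emeasure_eq_measure ennreal_mult)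
  finally show ?thesis
    using b by (simp add: measure_pmf.emeasure_eq_measure ennreal_le_iff)
qed

lemma measure_bind_pmf_le_const:
  fixes b :: real
  assumes "\<And>x. x \<in> set_pmf p \<Longrightarrow> measure_pmf.prob (f x) S \<le> b" "b \<ge> 0"
  shows "measure_pmf.prob (bind_pmf p f) S \<le> b"
  using measure_bind_pmf_le[of p f S b UNIV] assms by simp

lemma measure_cond_pmf_le:
  assumes "set_pmf p \<inter> s \<noteq> {}"
  shows "measure_pmf.prob (cond_pmf p s) B \<le> measure_pmf.prob p B / measure_pmf.prob p s"
proof -
  have "measure_pmf.prob (cond_pmf p s) B = measure_pmf.prob p (s \<inter> B) / measure_pmf.prob p s"
    by (simp add: cond_pmf.rep_eq[OF assms] emeasure_measure_pmf_not_zero[OF assms])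
  also have "\<dots> \<le> measure_pmf.prob p B / measure_pmf.prob p s"
    by (intro divide_right_mono measure_pmf.finite_measure_mono) auto
  finally show ?thesis .
qed

lemma map_pmf_Pi_pmf_list:
  assumes "finite A" "distinct js" "set js \<subseteq> A" "\<forall>j\<in>set js. p j = q"
  shows "map_pmf (\<lambda>Y. map Y js) (Pi_pmf A d p) = replicate_pmf (length js) q"
  using assms
proof (induction js arbitrary: A)
  case Nil
  then show ?case by simp
next
  case (Cons j js)
  have A: "A = insert j (A - {j})"
    using Cons.prems by auto
  have "map_pmf (\<lambda>Y. map Y (j # js)) (Pi_pmf A d p)
      = do {y \<leftarrow> p j; f \<leftarrow> Pi_pmf (A - {j}) d p; return_pmf (map (f(j := y)) (j # js))}"
    using Cons.prems by (subst A, subst Pi_pmf_insert') (auto simp: map_bind_pmf)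
  also have "\<dots> = do {y \<leftarrow> q; zs \<leftarrow> map_pmf (\<lambda>f. map f js) (Pi_pmf (A - {j}) d p); return_pmf (y # zs)}"
    using Cons.prems by (auto simp: bind_map_pmf intro!: bind_pmf_cong map_cong)
  also have "map_pmf (\<lambda>f. map f js) (Pi_pmf (A - {j}) d p) = replicate_pmf (length js) q"
    using Cons.prems by (intro Cons.IH) auto
  finally show ?case
    by simp
qed

lemma measure_codeword_pmf_le:
  assumes "measure_pmf.prob (replicate_pmf N P) {c. prefix_cond P N c} \<ge> 1/2"
  shows "measure_pmf.prob (codeword_pmf P N) B \<le> 2 * measure_pmf.prob (replicate_pmf N P) B"
proof -
  define \<rho> where "\<rho> = measure_pmf.prob (replicate_pmf N P) {c. prefix_cond P N c}"
  have "\<rho> > 0"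
    using assms by (simp add: \<rho>_def)
  then have "\<rho> \<noteq> 0"
    by simp
  then have "set_pmf (replicate_pmf N P) \<inter> {c. prefix_cond P N c} \<noteq> {}"
    unfolding \<rho>_def measure_pmf_zero_iff by blast
  then have "measure_pmf.prob (codeword_pmf P N) B \<le> measure_pmf.prob (replicate_pmf N P) B / \<rho>"
    unfolding codeword_pmf_def \<rho>_def by (rule measure_cond_pmf_le)
  also have "\<dots> \<le> 2 * measure_pmf.prob (replicate_pmf N P) B"
  proof -
    have "measure_pmf.prob (replicate_pmf N P) B * 1 \<le> measure_pmf.prob (replicate_pmf N P) B * (2 * \<rho>)"
      using assms by (intro mult_left_mono) (auto simp: \<rho>_def)
    then show ?thesis
      using \<open>\<rho> > 0\<close> by (simp add: pos_divide_le_eq algebra_simps)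
  qed
  finally show ?thesis .
qed

lemma prob_codeword_mutual_info_ge:
  fixes P :: "'x::finite pmf" and ys :: "'y::finite list"
  assumes "measure_pmf.prob (replicate_pmf N P) {c. prefix_cond P N c} \<ge> 1/2" "length ys \<le> N"
  shows "measure_pmf.prob (codeword_pmf P N)
           {c. r \<le> real (length ys) * mutual_info (emp_joint (take (length ys) c) ys)}
       \<le> 2 * (real (length ys + 1) ^ CARD('x \<times> 'y) * exp (- r))"
proof -
  have "measure_pmf.prob (replicate_pmf N P)
          {c. r \<le> real (length ys) * mutual_info (emp_joint (take (length ys) c) ys)}
      = measure_pmf.prob (map_pmf (take (length ys)) (replicate_pmf N P))
          {xs. r \<le> real (length ys) * mutual_info (emp_joint xs ys)}"
    by (simp add: vimage_def)
  also have "\<dots> \<le> real (length ys + 1) ^ CARD('x \<times> 'y) * exp (- r)"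
    unfolding map_pmf_take_replicate_pmf[OF assms(2)] by (rule prob_replicate_pmf_mutual_info_ge)
  finally show ?thesis
    using measure_codeword_pmf_le[OF assms(1),
        of "{c. r \<le> real (length ys) * mutual_info (emp_joint (take (length ys) c) ys)}"]
    by linarith
qed

lemma prob_noise_window_KL_ge:
  fixes Q :: "'x \<Rightarrow> 'y::finite pmf"
  assumes "1 \<le> i" "i \<le> n" "n \<le> H" and outside: "n < l \<or> l + N \<le> n - i + 1"
  shows "measure_pmf.prob (Pi_pmf {1..H} undefined (\<lambda>j. Q (chan_input star N C m l j)))
           {Y. ereal r \<le> ereal (real i) * KL_div (emp (window Y (n - i + 1) n)) (pmf (Q star))}
       \<le> real (i + 1) ^ CARD('y) * exp (- r)"
proof -
  define js where "js = [n - i + 1..<Suc n]"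
  define Y_pmf where "Y_pmf = Pi_pmf {1..H} undefined (\<lambda>j. Q (chan_input star N C m l j))"
  define KL_large where "KL_large ys \<longleftrightarrow> ereal r \<le> ereal (real i) * KL_div (emp ys) (pmf (Q star))"
    for ys :: "'y list"
  have "map_pmf (\<lambda>Y. map Y js) Y_pmf = replicate_pmf (length js) (Q star)"
    unfolding Y_pmf_def using assms by (intro map_pmf_Pi_pmf_list) (auto simp: js_def chan_input_def)
  moreover have "length js = i"
    using assms by (simp add: js_def)
  moreover have "{Y. KL_large (window Y (n - i + 1) n)} = (\<lambda>Y. map Y js) -` {ys. KL_large ys}"
    by (simp add: window_def js_def vimage_def)
  ultimately have "measure_pmf.prob Y_pmf {Y. KL_large (window Y (n - i + 1) n)}
      = measure_pmf.prob (replicate_pmf i (Q star)) {ys. KL_large ys}"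
    by (metis measure_map_pmf)
  then show ?thesis
    unfolding Y_pmf_def KL_large_def using prob_replicate_pmf_KL_ge by simp
qed

lemma chan_input_fun_upd:
  "m' \<noteq> m \<Longrightarrow> chan_input star N (C(m' := c)) m l j = chan_input star N C m l j"
  by (simp add: chan_input_def)

lemma joint_pmf_eq_bind_codeword:
  assumes "m' \<in> {1..M}" "m' \<noteq> m"
  shows "joint_pmf P Q star N M m l H =
    do {C \<leftarrow> Pi_pmf ({1..M} - {m'}) [] (\<lambda>_. codeword_pmf P N);
        Y \<leftarrow> Pi_pmf {1..H} undefined (\<lambda>j. Q (chan_input star N C m l j));
        map_pmf (\<lambda>c. (C(m' := c), Y)) (codeword_pmf P N)}"
proof -
  define W where "W = codeword_pmf P N"
  define Y_pmf where "Y_pmf C = Pi_pmf {1..H} undefined (\<lambda>j. Q (chan_input star N C m l j))" for C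
  have "{1..M} = insert m' ({1..M} - {m'})"
    using assms by auto
  then have "codebook_pmf P N M
      = do {c \<leftarrow> W; C \<leftarrow> Pi_pmf ({1..M} - {m'}) [] (\<lambda>_. W); return_pmf (C(m' := c))}"
    unfolding codebook_pmf_def W_def by (metis Pi_pmf_insert' finite_Diff finite_atLeastAtMost Diff_iff insertI1)
  then have "joint_pmf P Q star N M m l H
      = do {c \<leftarrow> W; C \<leftarrow> Pi_pmf ({1..M} - {m'}) [] (\<lambda>_. W); Y \<leftarrow> Y_pmf C; return_pmf (C(m' := c), Y)}"
    unfolding joint_pmf_def using assms(2)
    by (simp add: bind_assoc_pmf bind_return_pmf Y_pmf_def chan_input_fun_upd)
  also have "\<dots> = do {C \<leftarrow> Pi_pmf ({1..M} - {m'}) [] (\<lambda>_. W); Y \<leftarrow> Y_pmf C; c \<leftarrow> W;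
        return_pmf (C(m' := c), Y)}"
    by (subst bind_commute_pmf) (intro bind_pmf_cong refl bind_commute_pmf)
  finally show ?thesis
    by (simp add: W_def Y_pmf_def map_pmf_def)
qed

lemma length_window: "length (window Y a b) = Suc b - a"
  by (simp add: window_def Suc_diff_le)

lemma E_ev_subset:
  assumes "1 \<le> i" "i \<le> n"
  shows "E_ev Q star t1 t2 M m' n i \<subseteq>
    {(C, Y). ereal (t1 * ln (real M)) \<le> ereal (real i) * KL_div (emp (window Y (n - i + 1) n)) (pmf (Q star))
       \<and> t2 * ln (real M) \<le> real i * mutual_info (emp_joint (take i (C m')) (window Y (n - i + 1) n))}"
proof -
  have "E_ev Q star t1 t2 M m' n i \<subseteq> E_k Q star t1 t2 M m' n i i"
    using assms by (auto simp: E_ev_def)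
  moreover have "n - i + i = n"
    using assms by simp
  ultimately show ?thesis
    by (auto simp: E_k_def)
qed

lemma prob_codeword_E_ev_le:
  fixes P :: "'x::finite pmf" and Q :: "'x \<Rightarrow> 'y::finite pmf"
  assumes M: "M > 0" and i: "1 \<le> i" "i \<le> N" "i \<le> n"
    and prefix: "measure_pmf.prob (replicate_pmf N P) {c. prefix_cond P N c} \<ge> 1/2"
  shows "measure_pmf.prob (map_pmf (\<lambda>c. (C(m' := c), Y)) (codeword_pmf P N)) (E_ev Q star t1 t2 M m' n i)
    \<le> 2 * real (i + 1) ^ CARD('x \<times> 'y) * real M powr (- t2) * indicator {Y.
         ereal (t1 * ln (real M)) \<le> ereal (real i) * KL_div (emp (window Y (n - i + 1) n)) (pmf (Q star))} Y"
    (is "?prob \<le> ?\<beta> * indicator ?KL_large Y")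
proof -
  have E_subset: "E_ev Q star t1 t2 M m' n i \<subseteq> {(C, Y). Y \<in> ?KL_large
      \<and> t2 * ln (real M) \<le> real i * mutual_info (emp_joint (take i (C m')) (window Y (n - i + 1) n))}"
    using E_ev_subset[OF i(1,3), of Q star t1 t2 M m'] by auto
  show ?thesis
  proof (cases "Y \<in> ?KL_large")
    case True
    have "?prob \<le> measure_pmf.prob (codeword_pmf P N)
        {c. t2 * ln (real M) \<le> real i * mutual_info (emp_joint (take i c) (window Y (n - i + 1) n))}"
      unfolding measure_map_pmf using E_subset by (intro measure_pmf.finite_measure_mono) auto
    also have "\<dots> \<le> ?\<beta>"
      using prob_codeword_mutual_info_ge[OF prefix, of "window Y (n - i + 1) n" "t2 * ln (real M)"] i M
      by (simp add: length_window powr_def)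
    finally show ?thesis
      using True by simp
  next
    case False
    then have "(\<lambda>c. (C(m' := c), Y)) -` E_ev Q star t1 t2 M m' n i = {}"
      using E_subset by auto
    then show ?thesis
      using False by simp
  qed
qed

lemma prob_E_ev_le:
  fixes P :: "'x::finite pmf" and Q :: "'x \<Rightarrow> 'y::finite pmf"
  assumes m': "m' \<in> {1..M}" "m' \<noteq> m" and i: "1 \<le> i" "i \<le> N" "i \<le> n" "n \<le> H"
    and prefix: "measure_pmf.prob (replicate_pmf N P) {c. prefix_cond P N c} \<ge> 1/2"
  shows "measure_pmf.prob (joint_pmf P Q star N M m l H) (E_ev Q star t1 t2 M m' n i)
    \<le> 2 * real (i + 1) ^ CARD('x \<times> 'y) * real M powr (- t2) *
       (if n < l \<or> l + N \<le> n - i + 1 then real (i + 1) ^ CARD('y) * real M powr (- t1) else 1)"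
proof -
  define W where "W = codeword_pmf P N"
  define Y_pmf where "Y_pmf C = Pi_pmf {1..H} undefined (\<lambda>j. Q (chan_input star N C m l j))" for C
  define KL_large where "KL_large = {Y::nat \<Rightarrow> 'y.
    ereal (t1 * ln (real M)) \<le> ereal (real i) * KL_div (emp (window Y (n - i + 1) n)) (pmf (Q star))}"
  define \<beta> where "\<beta> = 2 * real (i + 1) ^ CARD('x \<times> 'y) * real M powr (- t2)"
  define \<gamma> where "\<gamma> = (if n < l \<or> l + N \<le> n - i + 1 then real (i + 1) ^ CARD('y) * real M powr (- t1) else 1)"
  have M: "M > 0"
    using m' by simp
  have output_step: "measure_pmf.prob (Y_pmf C) KL_large \<le> \<gamma>" for C
  proof (cases "n < l \<or> l + N \<le> n - i + 1")
    case True
    then show ?thesis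
      using prob_noise_window_KL_ge[OF i(1,3,4) True, of Q star C m "t1 * ln (real M)"] M
      by (simp add: Y_pmf_def KL_large_def \<gamma>_def powr_def)
  qed (simp add: \<gamma>_def)
  have given_codebook: "measure_pmf.prob (Y_pmf C \<bind> (\<lambda>Y. map_pmf (\<lambda>c. (C(m' := c), Y)) W))
      (E_ev Q star t1 t2 M m' n i) \<le> \<beta> * \<gamma>" for C
  proof -
    have "measure_pmf.prob (Y_pmf C \<bind> (\<lambda>Y. map_pmf (\<lambda>c. (C(m' := c), Y)) W)) (E_ev Q star t1 t2 M m' n i)
        \<le> \<beta> * measure_pmf.prob (Y_pmf C) KL_large"
      unfolding W_def \<beta>_def KL_large_def using M i prefix
      by (intro measure_bind_pmf_le prob_codeword_E_ev_le) simp_all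
    also have "\<dots> \<le> \<beta> * \<gamma>"
      using output_step by (intro mult_left_mono) (simp_all add: \<beta>_def)
    finally show ?thesis .
  qed
  have "measure_pmf.prob (joint_pmf P Q star N M m l H) (E_ev Q star t1 t2 M m' n i) \<le> \<beta> * \<gamma>"
    unfolding joint_pmf_eq_bind_codeword[OF m'] W_def[symmetric] Y_pmf_def[symmetric]
    by (rule measure_bind_pmf_le_const[OF given_codebook]) (simp add: \<beta>_def \<gamma>_def)
  then show ?thesis
    by (simp add: \<beta>_def \<gamma>_def)
qed

lemma prob_E_ev_le_uniform:
  fixes P :: "'x::finite pmf" and Q :: "'x \<Rightarrow> 'y::finite pmf"
  assumes "m' \<in> {1..M}" "m' \<noteq> m" and i: "1 \<le> i" "i \<le> N" "i \<le> n" "n \<le> H"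
    and "measure_pmf.prob (replicate_pmf N P) {c. prefix_cond P N c} \<ge> 1/2"
  shows "measure_pmf.prob (joint_pmf P Q star N M m l H) (E_ev Q star t1 t2 M m' n i)
    \<le> 2 * real (N + 1) ^ (CARD('x \<times> 'y) + CARD('y)) * real M powr (- t2)
       * (real M powr (- t1) + (if n \<in> {l..<l + 2 * N} then 1 else 0))"
proof -
  define K where "K = real (N + 1) ^ (CARD('x \<times> 'y) + CARD('y))"
  define e1 where "e1 = real M powr (- t1)"
  define e2 where "e2 = real M powr (- t2)"
  have e: "e1 \<ge> 0" "e2 \<ge> 0"
    by (simp_all add: e1_def e2_def)
  have i_N: "real (i + 1) \<le> real (N + 1)"
    using i by simp
  have "measure_pmf.prob (joint_pmf P Q star N M m l H) (E_ev Q star t1 t2 M m' n i)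
    \<le> 2 * real (i + 1) ^ CARD('x \<times> 'y) * e2 *
       (if n < l \<or> l + N \<le> n - i + 1 then real (i + 1) ^ CARD('y) * e1 else 1)"
    unfolding e1_def e2_def by (rule prob_E_ev_le[OF assms])
  also have "\<dots> \<le> 2 * K * e2 * (e1 + (if n \<in> {l..<l + 2 * N} then 1 else 0))"
  proof (cases "n < l \<or> l + N \<le> n - i + 1")
    case True
    have "real (i + 1) ^ CARD('x \<times> 'y) * real (i + 1) ^ CARD('y) \<le> K"
      unfolding K_def power_add[symmetric] using i_N by (intro power_mono) auto
    then have "2 * (real (i + 1) ^ CARD('x \<times> 'y) * real (i + 1) ^ CARD('y)) * (e2 * e1) \<le> 2 * K * (e2 * e1)"
      using e by (intro mult_right_mono) auto
    also have "\<dots> \<le> 2 * K * e2 * (e1 + (if n \<in> {l..<l + 2 * N} then 1 else 0))"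
      using e by (simp add: K_def algebra_simps)
    finally show ?thesis
      using True by (simp add: algebra_simps)
  next
    case False
    then have "n \<in> {l..<l + 2 * N}"
      using i by auto
    have "real (i + 1) ^ CARD('x \<times> 'y) \<le> real (N + 1) ^ CARD('x \<times> 'y)"
      using i_N by (intro power_mono) auto
    also have "\<dots> \<le> K"
      unfolding K_def by (intro power_increasing) auto
    finally have "2 * real (i + 1) ^ CARD('x \<times> 'y) * e2 \<le> 2 * K * e2"
      using e by (intro mult_right_mono) auto
    also have "\<dots> \<le> 2 * K * e2 * (e1 + 1)"
      using e by (simp add: K_def algebra_simps)
    finally show ?thesis
      using False \<open>n \<in> {l..<l + 2 * N}\<close> by simp
  qed
  finally show ?thesis
    by (simp add: K_def e1_def e2_def)
qed

lemma sum_sum_window_le: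
  fixes f :: "nat \<Rightarrow> nat \<Rightarrow> real"
  assumes f: "\<And>n i. n \<in> {1..H} \<Longrightarrow> i \<in> {1..min N n} \<Longrightarrow>
      f n i \<le> \<alpha> * (e + (if n \<in> {l..<l + 2 * N} then 1 else 0))"
    and "\<alpha> \<ge> 0" "e \<ge> 0"
  shows "(\<Sum>n\<in>{1..H}. \<Sum>i\<in>{1..min N n}. f n i) \<le> real N * \<alpha> * (real H * e + 2 * real N)"
proof -
  define g where "g n = \<alpha> * (e + (if n \<in> {l..<l + 2 * N} then 1 else 0))" for n
  have g_nonneg: "g n \<ge> 0" for n
    using assms by (simp add: g_def)
  have "(\<Sum>n\<in>{1..H}. \<Sum>i\<in>{1..min N n}. f n i) \<le> (\<Sum>n\<in>{1..H}. \<Sum>i\<in>{1..min N n}. g n)"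
    using f by (intro sum_mono) (simp add: g_def)
  also have "\<dots> \<le> (\<Sum>n\<in>{1..H}. real N * g n)"
    using g_nonneg by (intro sum_mono) (simp add: mult_right_mono)
  also have "\<dots> = real N * \<alpha> * (real H * e + (\<Sum>n\<in>{1..H}. if n \<in> {l..<l + 2 * N} then 1 else 0))"
    by (simp add: g_def sum_distrib_left sum.distrib algebra_simps)
  also have "(\<Sum>n\<in>{1..H}. if n \<in> {l..<l + 2 * N} then 1 else 0) = real (card ({1..H} \<inter> {l..<l + 2 * N}))"
    by (simp add: sum.If_cases Int_def)
  also have "\<dots> \<le> 2 * real N"
    using card_mono[of "{l..<l + 2 * N}" "{1..H} \<inter> {l..<l + 2 * N}"] by simp
  finally show ?thesis
    using assms(2) by (simp add: mult_left_mono)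
qed

lemma polynomial_powr_bound_rearrange:
  fixes M N A D :: nat
  assumes M: "M > 0" and N: "N \<ge> 1"
  shows "real M * (real N * (2 * real (N + 1) ^ D * real M powr (- t2))
           * (real A * real N * real M powr (- t1) + 2 * real N))
    \<le> 4 * 2 ^ D * real N ^ (D + 2) * (real M powr (- (t1 + t2 - 1)) * real A + real M powr (- (t2 - 1)))"
proof -
  define e1 where "e1 = real M powr (- t1)"
  define e2 where "e2 = real M powr (- t2)"
  have e: "e1 \<ge> 0" "e2 \<ge> 0"
    by (simp_all add: e1_def e2_def)
  have "real M * (real N * (2 * real (N + 1) ^ D * e2) * (real A * real N * e1 + 2 * real N))
      = 2 * real (N + 1) ^ D * real N ^ 2 * (real A * (real M * e2 * e1) + 2 * (real M * e2))"
    by (simp add: power2_eq_square algebra_simps)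
  also have "\<dots> \<le> 4 * real (N + 1) ^ D * real N ^ 2 * (real A * (real M * e2 * e1) + real M * e2)"
    using e by (simp add: algebra_simps)
  also have "\<dots> \<le> 4 * (2 ^ D * real N ^ D) * real N ^ 2 * (real A * (real M * e2 * e1) + real M * e2)"
  proof -
    have "real (N + 1) ^ D \<le> (2 * real N) ^ D"
      using N by (intro power_mono) auto
    then show ?thesis
      using e by (intro mult_right_mono) (auto simp: power_mult_distrib)
  qed
  also have "real M * e2 * e1 = real M powr (- (t1 + t2 - 1))"
  proof -
    have "- (t1 + t2 - 1) = 1 + - t2 + - t1"
      by simp
    then show ?thesis
      using M by (simp only: powr_add) (simp add: e1_def e2_def)
  qed
  also have "real M * e2 = real M powr (- (t2 - 1))"
  proof -
    have "- (t2 - 1) = 1 + - t2"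
      by simp
    then show ?thesis
      using M by (simp only: powr_add) (simp add: e2_def)
  qed
  finally show ?thesis
    by (simp add: e1_def e2_def power_add power2_eq_square algebra_simps)
qed

lemma sum_prob_E_ev_le:
  fixes P :: "'x::finite pmf" and Q :: "'x \<Rightarrow> 'y::finite pmf"
  assumes prefix: "measure_pmf.prob (replicate_pmf N P) {c. prefix_cond P N c} \<ge> 1/2"
    and N: "1 \<le> N" and A: "1 \<le> A"
  shows "(\<Sum>m'\<in>{1..M} - {m}. \<Sum>n\<in>{1..A + N - 1}. \<Sum>i\<in>{1..min N n}.
           measure_pmf.prob (joint_pmf P Q star N M m l (A + N - 1)) (E_ev Q star t1 t2 M m' n i))
       \<le> 4 * 2 ^ (CARD('x \<times> 'y) + CARD('y)) * real N ^ (CARD('x \<times> 'y) + CARD('y) + 2)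
         * (real M powr (- (t1 + t2 - 1)) * real A + real M powr (- (t2 - 1)))"
proof (cases "M = 0")
  case False
  define D where "D = CARD('x \<times> 'y) + CARD('y)"
  define H where "H = A + N - 1"
  define e1 where "e1 = real M powr (- t1)"
  define \<alpha> where "\<alpha> = 2 * real (N + 1) ^ D * real M powr (- t2)"
  have e: "e1 \<ge> 0" "\<alpha> \<ge> 0"
    by (simp_all add: e1_def \<alpha>_def)
  have "H \<le> A * N"
    using A N by (cases A; cases N) (simp_all add: H_def)
  then have H: "real H \<le> real A * real N"
    by (simp flip: of_nat_mult)
  have "(\<Sum>m'\<in>{1..M} - {m}. \<Sum>n\<in>{1..H}. \<Sum>i\<in>{1..min N n}.
           measure_pmf.prob (joint_pmf P Q star N M m l H) (E_ev Q star t1 t2 M m' n i))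
      \<le> (\<Sum>m'\<in>{1..M} - {m}. real N * \<alpha> * (real H * e1 + 2 * real N))"
  proof (intro sum_mono sum_sum_window_le e)
    fix m' n i assume "m' \<in> {1..M} - {m}" "n \<in> {1..H}" "i \<in> {1..min N n}"
    then show "measure_pmf.prob (joint_pmf P Q star N M m l H) (E_ev Q star t1 t2 M m' n i)
        \<le> \<alpha> * (e1 + (if n \<in> {l..<l + 2 * N} then 1 else 0))"
      unfolding \<alpha>_def e1_def D_def by (intro prob_E_ev_le_uniform prefix) auto
  qed
  also have "\<dots> = real (card ({1..M} - {m})) * (real N * \<alpha> * (real H * e1 + 2 * real N))"
    by simp
  also have "\<dots> \<le> real M * (real N * \<alpha> * (real A * real N * e1 + 2 * real N))"
  proof (intro mult_mono mult_left_mono add_right_mono)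
    show "real (card ({1..M} - {m})) \<le> real M"
      using card_mono[of "{1..M}" "{1..M} - {m}"] by auto
  qed (use H e in auto)
  also have "\<dots> \<le> 4 * 2 ^ D * real N ^ (D + 2) * (real M powr (- (t1 + t2 - 1)) * real A + real M powr (- (t2 - 1)))"
    unfolding \<alpha>_def e1_def using False N by (intro polynomial_powr_bound_rearrange) auto
  finally show ?thesis
    by (simp add: H_def D_def)
qed simp

theorem lemma5:
  fixes P :: "'x::finite pmf" and Q :: "'x \<Rightarrow> 'y::finite pmf" and star :: 'x
    and M :: "nat \<Rightarrow> nat" and t1 t2 :: real
  assumes rate: "\<forall>N\<ge>2. real N / ln (real N) \<le> ln (real (M N)) / ln (real CARD('x))"
  shows "\<exists>(c::real) (d::nat) (\<epsilon>1::nat \<Rightarrow> real) (\<epsilon>2::nat \<Rightarrow> real).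
           \<epsilon>1 \<longlonglongrightarrow> 0 \<and> \<epsilon>2 \<longlonglongrightarrow> 0 \<and>
           (\<forall>\<^sub>F N in sequentially. \<forall>A m l. 1 \<le> A \<longrightarrow> m \<in> {1..M N} \<longrightarrow> l \<in> {1..A} \<longrightarrow>
              (\<Sum>m'\<in>{1..M N} - {m}. \<Sum>n\<in>{1..A + N - 1}. \<Sum>i\<in>{1..min N n}.
                 measure_pmf.prob (joint_pmf P Q star N (M N) m l (A + N - 1))
                   (E_ev Q star t1 t2 (M N) m' n i))
              \<le> c * real N ^ d *
                 (real (M N) powr (- (t1 + t2 - 1 + \<epsilon>1 N)) * real A
                  + real (M N) powr (- (t2 - 1 + \<epsilon>2 N))))"
proof -
  define D where "D = CARD('x \<times> 'y) + CARD('y)"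
  have "\<forall>\<^sub>F N in sequentially. \<forall>A m l. 1 \<le> A \<longrightarrow> m \<in> {1..M N} \<longrightarrow> l \<in> {1..A} \<longrightarrow>
      (\<Sum>m'\<in>{1..M N} - {m}. \<Sum>n\<in>{1..A + N - 1}. \<Sum>i\<in>{1..min N n}.
         measure_pmf.prob (joint_pmf P Q star N (M N) m l (A + N - 1)) (E_ev Q star t1 t2 (M N) m' n i))
      \<le> 4 * 2 ^ D * real N ^ (D + 2) *
         (real (M N) powr (- (t1 + t2 - 1)) * real A + real (M N) powr (- (t2 - 1)))"
    using eventually_prob_prefix_cond_ge[of P] eventually_ge_at_top[of 1]
  proof eventually_elim
    case (elim N)
    then show ?case
      unfolding D_def by (intro allI impI sum_prob_E_ev_le)
  qed
  then show ?thesis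
    by (intro exI[of _ "4 * 2 ^ D"] exI[of _ "D + 2"] exI[of _ "\<lambda>_. 0"]) simp
qed

end
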